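(* Let $R$ be a commutative ring. The following are equivalent: (1) $R$ is clean; (2) $R$ is feckly clean and $R$ is a pm ring; (3) $R$ is feckly clean and whenever $a,b\in R$ satisfy $a+b=1$ there exist $r,s\in R$ with $(1+ar)(1+bs)=0$.
   Context: Rings have identity; $J(R)$ is the Jacobson radical. A ring is clean if every element is the sum of an idempotent and a unit. An element $u\in R$ is full if $RuR=R$. An element $a\in R$ is feckly clean if there exist $e\in R$ and a full element $u\in R$ with $a=e+u$ and $eR(1-e)\subseteq J(R)$; $R$ is feckly clean if every element is feckly clean. A commutative ring is a pm ring if every prime ideal is contained in exactly one maximal ideal. *)

theory Defs
  imports Main
begin

definition cr_ideal :: "'a::comm_ring_1 set \<Rightarrow> bool" where
  "cr_ideal I \<longleftrightarrow> 0 \<in> I \<and> (\<forall>x\<in>I. \<forall>y\<in>I. x + y \<in> I) \<and> (\<forall>r. \<forall>x\<in>I. r * x \<in> I)"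

definition maximal_ideal :: "'a::comm_ring_1 set \<Rightarrow> bool" where
  "maximal_ideal M \<longleftrightarrow> cr_ideal M \<and> M \<noteq> UNIV \<and>
     (\<forall>I. cr_ideal I \<and> M \<subseteq> I \<longrightarrow> I = M \<or> I = UNIV)"

definition prime_ideal :: "'a::comm_ring_1 set \<Rightarrow> bool" where
  "prime_ideal P \<longleftrightarrow> cr_ideal P \<and> P \<noteq> UNIV \<and> (\<forall>a b. a * b \<in> P \<longrightarrow> a \<in> P \<or> b \<in> P)"

definition jacobson :: "'a::comm_ring_1 set" where
  "jacobson = \<Inter> {M. maximal_ideal M}"

definition clean_ring :: "'a::comm_ring_1 itself \<Rightarrow> bool" where
  "clean_ring _ \<longleftrightarrow> (\<forall>a::'a. \<exists>e u. e * e = e \<and> u dvd 1 \<and> a = e + u)"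

definition RuR :: "'a::comm_ring_1 \<Rightarrow> 'a set" where
  "RuR u = {x. \<exists>(n::nat) r s. x = (\<Sum>i<n. r i * u * s i)}"

definition full :: "'a::comm_ring_1 \<Rightarrow> bool" where
  "full u \<longleftrightarrow> RuR u = UNIV"

definition feckly_clean_elem :: "'a::comm_ring_1 \<Rightarrow> bool" where
  "feckly_clean_elem a \<longleftrightarrow> (\<exists>e u. full u \<and> a = e + u \<and> {e * r * (1 - e) | r. True} \<subseteq> jacobson)"

definition feckly_clean_ring :: "'a::comm_ring_1 itself \<Rightarrow> bool" where
  "feckly_clean_ring _ \<longleftrightarrow> (\<forall>a::'a. feckly_clean_elem a)"

definition pm_ring :: "'a::comm_ring_1 itself \<Rightarrow> bool" where
  "pm_ring _ \<longleftrightarrow> (\<forall>P::'a set. prime_ideal P \<longrightarrow> (\<exists>!M. maximal_ideal M \<and> P \<subseteq> M))"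

end

theory Submission
  imports Defs
begin

(* In a commutative ring RuR = uR, so full elements are exactly the units, and
   eR(1-e) is contained in J(R) iff e(1-e) is in J(R).  Hence "feckly clean" means
   that every element is a unit plus an element e that is idempotent modulo J(R).

   Then:
     clean -> feckly clean, clean -> (star)          by explicit witnesses;
     (star) -> pm                                     two maximal ideals over a prime
                                                      would contain comaximal elements;
     pm -> (star)                                     via a prime ideal avoiding the
                                                      multiplicative set of products;
     feckly clean + (star) -> clean                   (star) lifts idempotents modulo J(R).
*)

lemma ideal_zero: "cr_ideal I \<Longrightarrow> 0 \<in> I"
  by (simp add: cr_ideal_def)

lemma ideal_add: "cr_ideal I \<Longrightarrow> x \<in> I \<Longrightarrow> y \<in> I \<Longrightarrow> x + y \<in> I"
  by (simp add: cr_ideal_def)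

lemma ideal_mult_left: "cr_ideal I \<Longrightarrow> x \<in> I \<Longrightarrow> r * x \<in> I"
  by (simp add: cr_ideal_def)

lemma ideal_mult_right: "cr_ideal I \<Longrightarrow> x \<in> I \<Longrightarrow> x * r \<in> I"
  using ideal_mult_left[of I x r] by (simp add: mult.commute)

lemma ideal_diff: "cr_ideal I \<Longrightarrow> x \<in> I \<Longrightarrow> y \<in> I \<Longrightarrow> x - y \<in> I"
  using ideal_add[of I x "-y"] ideal_mult_left[of I y "-1"] by simp

lemma ideal_one_UNIV: "cr_ideal I \<Longrightarrow> 1 \<in> I \<Longrightarrow> I = UNIV"
  using ideal_mult_right[of I 1] by auto

text \<open>An ideal containing both \<open>x\<close> and \<open>1 + xr\<close> contains \<open>1\<close>; this is how the
  elements \<open>1 + ar\<close> of the theorem are kept out of ideals.\<close>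

lemma ideal_one_plus_mult:
  assumes I: "cr_ideal I" and x: "x \<in> I" and "1 + x * r \<in> I"
  shows "I = UNIV"
proof -
  have "(1 + x * r) - x * r \<in> I"
    using ideal_diff[OF I \<open>1 + x * r \<in> I\<close> ideal_mult_right[OF I x]] .
  then show ?thesis using ideal_one_UNIV[OF I] by simp
qed

lemma maximal_ideal_ideal: "maximal_ideal M \<Longrightarrow> cr_ideal M"
  by (simp add: maximal_ideal_def)

lemma maximal_ideal_one: "maximal_ideal M \<Longrightarrow> 1 \<notin> M"
  using ideal_one_UNIV by (auto simp: maximal_ideal_def)

lemma maximal_ideal_one_plus_mult:
  assumes M: "maximal_ideal M" and x: "x \<in> M" shows "1 + x * r \<notin> M"
  using ideal_one_plus_mult[OF maximal_ideal_ideal[OF M] x] maximal_ideal_one[OF M] by blast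

definition ideal_adjoin :: "'a::comm_ring_1 set \<Rightarrow> 'a \<Rightarrow> 'a set" where
  "ideal_adjoin I a = {m + a * r | m r. m \<in> I}"

lemma ideal_adjoin_ideal:
  assumes I: "cr_ideal I" shows "cr_ideal (ideal_adjoin I a)"
  unfolding cr_ideal_def ideal_adjoin_def
proof (intro conjI ballI allI)
  show "0 \<in> {m + a * r |m r. m \<in> I}"
    using ideal_zero[OF I] by (intro CollectI exI[of _ 0]) auto
next
  fix x y assume "x \<in> {m + a * r |m r. m \<in> I}" "y \<in> {m + a * r |m r. m \<in> I}"
  then obtain m r m' r' where "x = m + a * r" "y = m' + a * r'" "m \<in> I" "m' \<in> I" by auto
  then show "x + y \<in> {m + a * r |m r. m \<in> I}"
    using ideal_add[OF I, of m m']
    by (intro CollectI exI[of _ "m + m'"] exI[of _ "r + r'"]) (auto simp: algebra_simps)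
next
  fix s x assume "x \<in> {m + a * r |m r. m \<in> I}"
  then obtain m r where "x = m + a * r" "m \<in> I" by auto
  then show "s * x \<in> {m + a * r |m r. m \<in> I}"
    using ideal_mult_left[OF I, of m s]
    by (intro CollectI exI[of _ "s * m"] exI[of _ "s * r"]) (auto simp: algebra_simps)
qed

lemma ideal_adjoin_subset: "cr_ideal I \<Longrightarrow> I \<subseteq> ideal_adjoin I a"
  unfolding ideal_adjoin_def by (force intro: exI[of _ 0])

lemma ideal_adjoin_elem: "cr_ideal I \<Longrightarrow> a \<in> ideal_adjoin I a"
  unfolding ideal_adjoin_def using ideal_zero by (force intro: exI[of _ 1])

lemma maximal_ideal_comaximal:
  assumes M: "maximal_ideal M" and y: "y \<notin> M"
  obtains m t where "m \<in> M" "1 = m + y * t"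
proof -
  have I: "cr_ideal M" using M by (rule maximal_ideal_ideal)
  have "ideal_adjoin M y = M \<or> ideal_adjoin M y = UNIV"
    using M ideal_adjoin_ideal[OF I] ideal_adjoin_subset[OF I] by (simp add: maximal_ideal_def)
  then have "1 \<in> ideal_adjoin M y" using ideal_adjoin_elem[OF I, of y] y by auto
  then show thesis using that unfolding ideal_adjoin_def by blast
qed

lemma maximal_ideal_prime:
  assumes M: "maximal_ideal M" and ab: "a * b \<in> M"
  shows "a \<in> M \<or> b \<in> M"
proof (rule ccontr)
  assume "\<not> (a \<in> M \<or> b \<in> M)"
  then obtain m r where m: "m \<in> M" and one: "1 = m + a * r" and b: "b \<notin> M"
    using maximal_ideal_comaximal[OF M] by blast
  have I: "cr_ideal M" using M by (rule maximal_ideal_ideal)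
  have "b = b * (m + a * r)" using one by simp
  also have "\<dots> = b * m + (a * b) * r" by (simp add: algebra_simps)
  also have "\<dots> \<in> M" using ideal_add[OF I ideal_mult_left[OF I m] ideal_mult_right[OF I ab]] .
  finally show False using b by contradiction
qed

lemma ideal_maximal_avoiding:
  fixes I :: "'a::comm_ring_1 set"
  assumes "cr_ideal I" "I \<inter> S = {}"
  obtains Q where "cr_ideal Q" "I \<subseteq> Q" "Q \<inter> S = {}"
    "\<forall>Q'. cr_ideal Q' \<and> Q \<subseteq> Q' \<and> Q' \<inter> S = {} \<longrightarrow> Q' = Q"
proof -
  define A where "A = {Q. cr_ideal Q \<and> I \<subseteq> Q \<and> Q \<inter> S = {}}"
  have "\<exists>U\<in>A. \<forall>X\<in>C. X \<subseteq> U" if C: "C \<in> chains A" for C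
  proof (cases "C = {}")
    case True then show ?thesis using assms by (auto simp: A_def)
  next
    case False
    have CA: "C \<subseteq> A" using chainsD2[OF C] .
    have "cr_ideal (\<Union>C)" unfolding cr_ideal_def
    proof (intro conjI ballI allI)
      obtain X where "X \<in> C" using False by auto
      then show "0 \<in> \<Union>C" using CA ideal_zero[of X] by (auto simp: A_def)
    next
      fix x y assume "x \<in> \<Union>C" "y \<in> \<Union>C"
      then obtain X Y where XY: "X \<in> C" "Y \<in> C" "x \<in> X" "y \<in> Y" by auto
      from chainsD[OF C XY(1,2)] show "x + y \<in> \<Union>C"
      proof
        assume "X \<subseteq> Y"
        then show ?thesis using XY CA ideal_add[of Y x y] by (auto simp: A_def)
      next
        assume "Y \<subseteq> X"
        then show ?thesis using XY CA ideal_add[of X x y] by (auto simp: A_def)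
      qed
    next
      fix r x assume "x \<in> \<Union>C"
      then obtain X where "X \<in> C" "x \<in> X" by auto
      then show "r * x \<in> \<Union>C" using CA ideal_mult_left[of X x r] by (auto simp: A_def)
    qed
    moreover have "I \<subseteq> \<Union>C" using False CA by (auto simp: A_def)
    moreover have "\<Union>C \<inter> S = {}" using CA by (auto simp: A_def)
    ultimately show ?thesis by (auto simp: A_def)
  qed
  then obtain Q where Q: "Q \<in> A" and max: "\<forall>X\<in>A. Q \<subseteq> X \<longrightarrow> X = Q"
    using Zorn_Lemma2[of A] by blast
  have "\<forall>Q'. cr_ideal Q' \<and> Q \<subseteq> Q' \<and> Q' \<inter> S = {} \<longrightarrow> Q' = Q"
    using Q max unfolding A_def by blast
  then show thesis using that Q unfolding A_def by blast
qed

lemma proper_ideal_in_maximal: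
  fixes I :: "'a::comm_ring_1 set"
  assumes I: "cr_ideal I" and one: "1 \<notin> I"
  obtains M where "maximal_ideal M" "I \<subseteq> M"
proof -
  obtain Q where Q: "cr_ideal Q" "I \<subseteq> Q" "Q \<inter> {1} = {}"
    and max: "\<forall>Q'. cr_ideal Q' \<and> Q \<subseteq> Q' \<and> Q' \<inter> {1} = {} \<longrightarrow> Q' = Q"
    using ideal_maximal_avoiding[OF I, of "{1}"] one by blast
  have "maximal_ideal Q"
    unfolding maximal_ideal_def
  proof (intro conjI allI impI)
    show "cr_ideal Q" "Q \<noteq> UNIV" using Q by auto
  next
    fix J assume J: "cr_ideal J \<and> Q \<subseteq> J"
    show "J = Q \<or> J = UNIV"
    proof (cases "1 \<in> J")
      case True then show ?thesis using J ideal_one_UNIV by blast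
    next
      case False then show ?thesis using J max by blast
    qed
  qed
  then show thesis using that Q(2) by blast
qed

lemma unit_iff_no_maximal_ideal:
  fixes x :: "'a::comm_ring_1"
  shows "x dvd 1 \<longleftrightarrow> (\<forall>M. maximal_ideal M \<longrightarrow> x \<notin> M)"
proof
  assume "x dvd 1"
  then obtain k where k: "1 = x * k" by (auto elim: dvdE)
  show "\<forall>M. maximal_ideal M \<longrightarrow> x \<notin> M"
  proof (intro allI impI notI)
    fix M assume M: "maximal_ideal M" and "x \<in> M"
    then have "x * k \<in> M" using ideal_mult_right maximal_ideal_ideal by blast
    then show False using k maximal_ideal_one[OF M] by simp
  qed
next
  assume none: "\<forall>M. maximal_ideal M \<longrightarrow> x \<notin> M"
  show "x dvd 1"
  proof (rule ccontr)
    assume nonunit: "\<not> x dvd 1"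
    have I: "cr_ideal {0::'a}" by (simp add: cr_ideal_def)
    have "1 \<notin> ideal_adjoin {0} x"
      using nonunit unfolding ideal_adjoin_def by (auto intro: dvdI)
    then obtain M where "maximal_ideal M" "ideal_adjoin {0} x \<subseteq> M"
      using proper_ideal_in_maximal[OF ideal_adjoin_ideal[OF I]] by blast
    then show False using none ideal_adjoin_elem[OF I, of x] by blast
  qed
qed

lemma jacobson_iff: "x \<in> jacobson \<longleftrightarrow> (\<forall>M. maximal_ideal M \<longrightarrow> x \<in> M)"
  by (auto simp: jacobson_def)

lemma jacobson_ideal: "cr_ideal (jacobson :: 'a::comm_ring_1 set)"
  unfolding cr_ideal_def
proof (intro conjI ballI allI)
  show "0 \<in> jacobson"
    unfolding jacobson_iff using maximal_ideal_ideal ideal_zero by blast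
next
  fix x y :: 'a assume "x \<in> jacobson" "y \<in> jacobson"
  then show "x + y \<in> jacobson"
    unfolding jacobson_iff using maximal_ideal_ideal ideal_add by blast
next
  fix r x :: 'a assume "x \<in> jacobson"
  then show "r * x \<in> jacobson"
    unfolding jacobson_iff using maximal_ideal_ideal ideal_mult_left by blast
qed

lemma unit_plus_jacobson:
  assumes u: "u dvd 1" and j: "j \<in> jacobson"
  shows "(u + j) dvd 1"
  unfolding unit_iff_no_maximal_ideal
proof (intro allI impI notI)
  fix M assume M: "maximal_ideal M" and "u + j \<in> M"
  then have "(u + j) - j \<in> M"
    using ideal_diff[OF maximal_ideal_ideal[OF M]] j jacobson_iff by blast
  then show False using u M unit_iff_no_maximal_ideal by auto
qed

section \<open>Feckly clean elements of a commutative ring\<close>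

text \<open>In a commutative ring \<open>RuR = uR\<close>, so an element is full iff it is a unit.\<close>

lemma full_iff_unit: "full (u::'a::comm_ring_1) \<longleftrightarrow> u dvd 1"
proof
  assume "full u"
  then have "1 \<in> RuR u" by (simp add: full_def)
  then obtain n r s where "1 = (\<Sum>i<(n::nat). r i * u * s i)" unfolding RuR_def by blast
  also have "\<dots> = u * (\<Sum>i<n. r i * s i)" by (simp add: sum_distrib_left mult_ac)
  finally show "u dvd 1" by (metis dvd_triv_left)
next
  assume "u dvd 1"
  then obtain v where v: "1 = u * v" by (auto elim: dvdE)
  have "x \<in> RuR u" for x
    unfolding RuR_def mem_Collect_eq
  proof (intro exI)
    show "x = (\<Sum>i<(1::nat). (\<lambda>_. x * v) i * u * (\<lambda>_. 1) i)"
      using v by (simp add: mult.assoc mult.commute[of v u])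
  qed
  then show "full u" by (auto simp: full_def)
qed

lemma corner_in_jacobson_iff:
  fixes e :: "'a::comm_ring_1"
  shows "{e * r * (1 - e) | r. True} \<subseteq> jacobson \<longleftrightarrow> e * (1 - e) \<in> jacobson"
proof
  assume "{e * r * (1 - e) | r. True} \<subseteq> jacobson"
  moreover have "e * 1 * (1 - e) \<in> {e * r * (1 - e) | r. True}" by blast
  ultimately show "e * (1 - e) \<in> jacobson" by auto
next
  assume "e * (1 - e) \<in> jacobson"
  then have "r * (e * (1 - e)) \<in> jacobson" for r
    using ideal_mult_left[OF jacobson_ideal] by blast
  then show "{e * r * (1 - e) | r. True} \<subseteq> jacobson" by (auto simp: mult_ac)
qed

lemma feckly_clean_elem_iff:
  fixes a :: "'a::comm_ring_1"
  shows "feckly_clean_elem a \<longleftrightarrow> (\<exists>e u. u dvd 1 \<and> a = e + u \<and> e * (1 - e) \<in> jacobson)"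
  unfolding feckly_clean_elem_def full_iff_unit corner_in_jacobson_iff ..

text \<open>An idempotent satisfies \<open>e(1-e) = 0\<close>, so clean rings are feckly clean.\<close>

lemma clean_imp_feckly_clean:
  assumes "clean_ring TYPE('a::comm_ring_1)"
  shows "feckly_clean_ring TYPE('a)"
  unfolding feckly_clean_ring_def feckly_clean_elem_iff
proof
  fix a :: 'a
  obtain e u where "e * e = e" "u dvd 1" "a = e + u"
    using assms unfolding clean_ring_def by blast
  moreover have "e * (1 - e) = 0" using \<open>e * e = e\<close> by (simp add: algebra_simps)
  ultimately show "\<exists>e u. u dvd 1 \<and> a = e + u \<and> e * (1 - e) \<in> jacobson"
    using ideal_zero[OF jacobson_ideal] by (intro exI[of _ e] exI[of _ u]) auto
qed

section \<open>The comaximal factorisation condition\<close>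

definition pm_criterion :: "'a::comm_ring_1 itself \<Rightarrow> bool" where
  "pm_criterion _ \<longleftrightarrow> (\<forall>a b::'a. a + b = 1 \<longrightarrow> (\<exists>r s. (1 + a * r) * (1 + b * s) = 0))"

text \<open>A clean decomposition \<open>a = e + u\<close> yields the witnesses directly:
  \<open>1 + a(-v(1-e)) = e\<close> and \<open>1 + b(ve) = 1 - e\<close>, where \<open>uv = 1\<close>.\<close>

lemma clean_elem_factorisation:
  fixes a b e u :: "'a::comm_ring_1"
  assumes idem: "e * e = e" and "u dvd 1" and a: "a = e + u" and ab: "a + b = 1"
  shows "\<exists>r s. (1 + a * r) * (1 + b * s) = 0"
proof -
  obtain v where "1 = u * v" using \<open>u dvd 1\<close> by (rule dvdE)
  then have uv: "u * v = 1" by simp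
  have b: "b = 1 - e - u" using ab a by (simp add: algebra_simps)
  have "1 + a * (- v * (1 - e)) = 1 - v * (e - e * e) - (u * v) * (1 - e)"
    unfolding a by (simp add: algebra_simps)
  also have "\<dots> = e" using idem uv by simp
  finally have fa: "1 + a * (- v * (1 - e)) = e" .
  have "1 + b * (v * e) = 1 + v * (e - e * e) - (u * v) * e"
    unfolding b by (simp add: algebra_simps)
  also have "\<dots> = 1 - e" using idem uv by simp
  finally have fb: "1 + b * (v * e) = 1 - e" .
  have "e * (1 - e) = 0" using idem by (simp add: algebra_simps)
  then have "(1 + a * (- v * (1 - e))) * (1 + b * (v * e)) = 0" unfolding fa fb .
  then show ?thesis by blast
qed

lemma clean_imp_pm_criterion:
  assumes "clean_ring TYPE('a::comm_ring_1)"
  shows "pm_criterion TYPE('a)"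
  unfolding pm_criterion_def
proof (intro allI impI)
  fix a b :: 'a assume "a + b = 1"
  moreover obtain e u where "e * e = e" "u dvd 1" "a = e + u"
    using assms unfolding clean_ring_def by blast
  ultimately show "\<exists>r s. (1 + a * r) * (1 + b * s) = 0"
    using clean_elem_factorisation by blast
qed

text \<open>Under the criterion, two maximal ideals over a prime ideal coincide: otherwise
  \<open>1 = m + y\<close> with \<open>m \<in> M\<^sub>1\<close>, \<open>y \<in> M\<^sub>2\<close>, and \<open>(1 + mr)(1 + ys) = 0 \<in> P\<close>
  forces \<open>1 + mr \<in> M\<^sub>1\<close> or \<open>1 + ys \<in> M\<^sub>2\<close>.\<close>

lemma pm_criterion_maximal_unique:
  fixes P :: "'a::comm_ring_1 set"
  assumes crit: "pm_criterion TYPE('a)" and P: "prime_ideal P"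
    and M1: "maximal_ideal M1" "P \<subseteq> M1" and M2: "maximal_ideal M2" "P \<subseteq> M2"
  shows "M1 = M2"
proof (rule ccontr)
  assume ne: "M1 \<noteq> M2"
  have "\<not> M2 \<subseteq> M1"
  proof
    assume "M2 \<subseteq> M1"
    then have "M1 = M2 \<or> M1 = UNIV"
      using M2(1) maximal_ideal_ideal[OF M1(1)] by (auto simp: maximal_ideal_def)
    then show False using ne maximal_ideal_one[OF M1(1)] by blast
  qed
  then obtain y where y: "y \<in> M2" "y \<notin> M1" by blast
  then obtain m t where m: "m \<in> M1" and one: "1 = m + y * t"
    using maximal_ideal_comaximal[OF M1(1)] by blast
  have yt: "y * t \<in> M2" using ideal_mult_right[OF maximal_ideal_ideal[OF M2(1)] y(1)] .
  have "m + y * t = 1" using one by simp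
  then obtain r s where "(1 + m * r) * (1 + (y * t) * s) = 0"
    using crit unfolding pm_criterion_def by blast
  moreover have "0 \<in> P" using P ideal_zero unfolding prime_ideal_def by blast
  ultimately have "(1 + m * r) * (1 + (y * t) * s) \<in> P" by simp
  then have "1 + m * r \<in> P \<or> 1 + (y * t) * s \<in> P"
    using P by (simp add: prime_ideal_def)
  then show False
    using M1 M2 maximal_ideal_one_plus_mult[OF M1(1) m] maximal_ideal_one_plus_mult[OF M2(1) yt]
    by blast
qed

text \<open>Every prime lies in some maximal ideal (Krull), and in only one by the above.\<close>

lemma pm_criterion_imp_pm:
  assumes crit: "pm_criterion TYPE('a::comm_ring_1)"
  shows "pm_ring TYPE('a)"
  unfolding pm_ring_def
proof (intro allI impI)
  fix P :: "'a set" assume P: "prime_ideal P"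
  then have "cr_ideal P" "1 \<notin> P" using ideal_one_UNIV by (auto simp: prime_ideal_def)
  then obtain M where "maximal_ideal M" "P \<subseteq> M" by (rule proper_ideal_in_maximal)
  then show "\<exists>!M. maximal_ideal M \<and> P \<subseteq> M"
    using pm_criterion_maximal_unique[OF crit P] by blast
qed

lemma prime_ideal_avoiding:
  fixes S :: "'a::comm_ring_1 set"
  assumes mult: "\<And>x y. x \<in> S \<Longrightarrow> y \<in> S \<Longrightarrow> x * y \<in> S"
    and "1 \<in> S" and "0 \<notin> S"
  obtains Q where "prime_ideal Q" "Q \<inter> S = {}"
proof -
  have zero: "cr_ideal {0::'a}" by (simp add: cr_ideal_def)
  have "{0} \<inter> S = {}" using \<open>0 \<notin> S\<close> by blast
  then obtain Q where Q: "cr_ideal Q" and "{0} \<subseteq> Q" and avoid: "Q \<inter> S = {}"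
    and max: "\<forall>Q'. cr_ideal Q' \<and> Q \<subseteq> Q' \<and> Q' \<inter> S = {} \<longrightarrow> Q' = Q"
    by (rule ideal_maximal_avoiding[OF zero])
  have meet: "\<exists>q t. q \<in> Q \<and> q + x * t \<in> S" if "x \<notin> Q" for x
  proof (rule ccontr)
    assume "\<not> ?thesis"
    then have "ideal_adjoin Q x \<inter> S = {}" unfolding ideal_adjoin_def by auto
    then have "ideal_adjoin Q x = Q"
      using max ideal_adjoin_ideal[OF Q] ideal_adjoin_subset[OF Q] by blast
    then show False using ideal_adjoin_elem[OF Q, of x] that by simp
  qed
  have "prime_ideal Q" unfolding prime_ideal_def
  proof (intro conjI allI impI)
    show "cr_ideal Q" by fact
    show "Q \<noteq> UNIV" using avoid \<open>1 \<in> S\<close> by blast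
  next
    fix x y assume xy: "x * y \<in> Q"
    show "x \<in> Q \<or> y \<in> Q"
    proof (rule ccontr)
      assume "\<not> (x \<in> Q \<or> y \<in> Q)"
      then obtain q1 t1 q2 t2 where q: "q1 \<in> Q" "q1 + x * t1 \<in> S" "q2 \<in> Q" "q2 + y * t2 \<in> S"
        using meet by blast
      have "(q1 + x * t1) * (q2 + y * t2)
            = q1 * (q2 + y * t2) + (q2 * (x * t1) + (x * y) * (t1 * t2))"
        by (simp add: algebra_simps)
      also have "\<dots> \<in> Q"
        using ideal_mult_right[OF Q q(1)] ideal_mult_right[OF Q q(3)]
          ideal_mult_right[OF Q xy] by (blast intro: ideal_add[OF Q])
      finally show False using mult[OF q(2,4)] avoid by blast
    qed
  qed
  then show thesis using that avoid by blast
qed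

text \<open>If \<open>a + b = 1\<close> and no product \<open>(1 + ar)(1 + bs)\<close> vanishes, these products form
  a multiplicative set avoided by some prime \<open>Q\<close>.  Then \<open>Q + aR\<close> and \<open>Q + bR\<close> are proper,
  and the maximal ideals above them both lie over \<open>Q\<close>; in a pm ring they coincide and
  contain \<open>a + b = 1\<close>.\<close>

lemma pm_imp_pm_criterion:
  assumes pm: "pm_ring TYPE('a::comm_ring_1)"
  shows "pm_criterion TYPE('a)"
  unfolding pm_criterion_def
proof (intro allI impI)
  fix a b :: 'a assume ab: "a + b = 1"
  show "\<exists>r s. (1 + a * r) * (1 + b * s) = 0"
  proof (rule ccontr)
    assume nz: "\<not> ?thesis"
    define S where "S = {(1 + a * r) * (1 + b * s) | r s. True}"
    have Sa: "1 + a * r \<in> S" for r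
      unfolding S_def by (intro CollectI exI[of _ r] exI[of _ 0]) simp
    have Sb: "1 + b * s \<in> S" for s
      unfolding S_def by (intro CollectI exI[of _ 0] exI[of _ s]) simp
    have Smult: "x * y \<in> S" if xS: "x \<in> S" and yS: "y \<in> S" for x y
    proof -
      obtain r s where x: "x = (1 + a * r) * (1 + b * s)" using xS unfolding S_def by blast
      obtain r' s' where y: "y = (1 + a * r') * (1 + b * s')" using yS unfolding S_def by blast
      from x y have "x * y = (1 + a * (r + r' + a * r * r')) * (1 + b * (s + s' + b * s * s'))"
        by (simp add: algebra_simps)
      then show ?thesis unfolding S_def by blast
    qed
    have "1 \<in> S" using Sa[of 0] by simp
    moreover have "0 \<notin> S" using nz unfolding S_def by auto
    ultimately obtain Q where Q: "prime_ideal Q" "Q \<inter> S = {}"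
      using prime_ideal_avoiding[of S] Smult by blast
    have QI: "cr_ideal Q" using Q(1) by (simp add: prime_ideal_def)
    have proper: "1 \<notin> ideal_adjoin Q c" if "\<And>t. 1 + c * t \<in> S" for c
    proof
      assume "1 \<in> ideal_adjoin Q c"
      then obtain q t where "q \<in> Q" "1 = q + c * t" unfolding ideal_adjoin_def by blast
      moreover have "q = 1 + c * (- t)" using \<open>1 = q + c * t\<close> by (simp add: algebra_simps)
      ultimately show False using that[of "-t"] Q(2) by blast
    qed
    obtain M1 where M1: "maximal_ideal M1" "ideal_adjoin Q a \<subseteq> M1"
      using proper_ideal_in_maximal[OF ideal_adjoin_ideal[OF QI] proper[OF Sa]] by blast
    obtain M2 where M2: "maximal_ideal M2" "ideal_adjoin Q b \<subseteq> M2"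
      using proper_ideal_in_maximal[OF ideal_adjoin_ideal[OF QI] proper[OF Sb]] by blast
    have "Q \<subseteq> M1" "Q \<subseteq> M2" using M1 M2 ideal_adjoin_subset[OF QI] by blast+
    then have "M1 = M2" using pm Q(1) M1(1) M2(1) unfolding pm_ring_def by blast
    moreover have "a \<in> M1" "b \<in> M2" using M1 M2 ideal_adjoin_elem[OF QI] by blast+
    ultimately have "a + b \<in> M1" using ideal_add[OF maximal_ideal_ideal[OF M1(1)]] by simp
    then show False using ab maximal_ideal_one[OF M1(1)] by simp
  qed
qed

section \<open>Lifting idempotents modulo the Jacobson radical\<close>

lemma orthogonal_sum_idempotent:
  fixes f g w :: "'a::comm_ring_1"
  assumes fg: "f * g = 0" and w: "(f + g) * w = 1"
  shows "(f * w) * (f * w) = f * w"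
proof -
  have "f * w = (f * w) * ((f + g) * w)" using w by simp
  also have "\<dots> = (f * w) * (f * w) + (f * g) * (w * w)" by (simp add: algebra_simps)
  finally show ?thesis using fg by simp
qed

lemma maximal_ideal_factor_dichotomy:
  fixes e :: "'a::comm_ring_1"
  assumes M: "maximal_ideal M" and e: "e * (1 - e) \<in> M"
    and fg: "(1 + e * r) * (1 + (1 - e) * s) = 0"
  shows "(e \<in> M \<and> 1 + (1 - e) * s \<in> M \<and> 1 + e * r \<notin> M)
       \<or> (1 - e \<in> M \<and> 1 + e * r \<in> M \<and> 1 + (1 - e) * s \<notin> M)"
proof -
  have "1 + e * r \<in> M \<or> 1 + (1 - e) * s \<in> M"
    using maximal_ideal_prime[OF M] fg ideal_zero[OF maximal_ideal_ideal[OF M]] by simp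
  moreover have "e \<in> M \<or> 1 - e \<in> M" using maximal_ideal_prime[OF M e] .
  ultimately show ?thesis using maximal_ideal_one_plus_mult[OF M] by blast
qed

text \<open>Write \<open>e + (1 - e) = 1\<close>, pick \<open>f = 1 + er\<close>, \<open>g = 1 + (1-e)s\<close>
  with \<open>fg = 0\<close>.  By the dichotomy each maximal ideal contains exactly one of \<open>f, g\<close>;
  hence \<open>f + g\<close> is a unit, and
  \<open>E = 1 - f(f+g)\<^sup>-\<^sup>1\<close> is an idempotent congruent to \<open>e\<close> modulo every maximal ideal.\<close>

lemma pm_criterion_lift_idempotent:
  fixes e :: "'a::comm_ring_1"
  assumes crit: "pm_criterion TYPE('a)" and e: "e * (1 - e) \<in> jacobson"
  obtains E where "E * E = E" "e - E \<in> jacobson"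
proof -
  have "e + (1 - e) = 1" by simp
  then obtain r s where rs: "(1 + e * r) * (1 + (1 - e) * s) = 0"
    using crit unfolding pm_criterion_def by blast
  define f where f: "f = 1 + e * r"
  define g where g: "g = 1 + (1 - e) * s"
  have fg: "f * g = 0" using rs unfolding f g .
  have sides: "(e \<in> M \<and> g \<in> M \<and> f \<notin> M) \<or> (1 - e \<in> M \<and> f \<in> M \<and> g \<notin> M)"
    if M: "maximal_ideal M" for M
    using maximal_ideal_factor_dichotomy[OF M _ rs] e M jacobson_iff unfolding f g by blast
  have "(f + g) dvd 1"
    unfolding unit_iff_no_maximal_ideal
  proof (intro allI impI notI)
    fix M assume M: "maximal_ideal M" and fgM: "f + g \<in> M"
    have I: "cr_ideal M" using M by (rule maximal_ideal_ideal)
    from sides[OF M] show False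
    proof
      assume "e \<in> M \<and> g \<in> M \<and> f \<notin> M"
      then show False using ideal_diff[OF I fgM, of g] by simp
    next
      assume "1 - e \<in> M \<and> f \<in> M \<and> g \<notin> M"
      then show False using ideal_diff[OF I fgM, of f] by simp
    qed
  qed
  then obtain w where w: "(f + g) * w = 1" by (metis dvdE eq_commute)
  define E where "E = 1 - f * w"
  have "E * E = E"
    using orthogonal_sum_idempotent[OF fg w] unfolding E_def by (simp add: algebra_simps)
  moreover have "e - E \<in> M" if M: "maximal_ideal M" for M
  proof -
    have I: "cr_ideal M" using M by (rule maximal_ideal_ideal)
    have "e - E = e - g * w" "e - E = f * w - (1 - e)"
      unfolding E_def using w by (simp_all add: algebra_simps)
    then show ?thesis
      using sides[OF M] ideal_diff[OF I] ideal_mult_right[OF I] by metis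
  qed
  ultimately show thesis using that jacobson_iff by blast
qed

text \<open>Feckly clean together with the criterion gives clean: from \<open>x = e + u\<close> with
  \<open>e\<close> idempotent modulo \<open>J(R)\<close>, lift \<open>e\<close> to \<open>E\<close>; then \<open>x = E + (u + (e - E))\<close> and
  the second summand is a unit.\<close>

lemma feckly_clean_pm_criterion_imp_clean:
  assumes fc: "feckly_clean_ring TYPE('a::comm_ring_1)" and crit: "pm_criterion TYPE('a)"
  shows "clean_ring TYPE('a)"
  unfolding clean_ring_def
proof
  fix x :: 'a
  obtain e u where u: "u dvd 1" and x: "x = e + u" and e: "e * (1 - e) \<in> jacobson"
    using fc unfolding feckly_clean_ring_def feckly_clean_elem_iff by blast
  obtain E where E: "E * E = E" "e - E \<in> jacobson"
    using pm_criterion_lift_idempotent[OF crit e] by blast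
  have "(u + (e - E)) dvd 1" using unit_plus_jacobson[OF u E(2)] .
  moreover have "x = E + (u + (e - E))" using x by simp
  ultimately show "\<exists>e u. e * e = e \<and> u dvd 1 \<and> x = e + u" using E(1) by blast
qed

theorem theorem5p6:
  shows "(clean_ring TYPE('a::comm_ring_1) \<longleftrightarrow> feckly_clean_ring TYPE('a) \<and> pm_ring TYPE('a))
       \<and> (feckly_clean_ring TYPE('a) \<and> pm_ring TYPE('a) \<longleftrightarrow>
          feckly_clean_ring TYPE('a) \<and>
          (\<forall>a b::'a. a + b = 1 \<longrightarrow> (\<exists>r s. (1 + a * r) * (1 + b * s) = 0)))"
proof -
  have criterion: "pm_criterion TYPE('a) \<longleftrightarrow>
      (\<forall>a b::'a. a + b = 1 \<longrightarrow> (\<exists>r s. (1 + a * r) * (1 + b * s) = 0))"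
    by (simp add: pm_criterion_def)
  have "clean_ring TYPE('a) \<Longrightarrow> feckly_clean_ring TYPE('a)"
    by (rule clean_imp_feckly_clean)
  moreover have "clean_ring TYPE('a) \<Longrightarrow> pm_criterion TYPE('a)"
    by (rule clean_imp_pm_criterion)
  moreover have "pm_criterion TYPE('a) \<longleftrightarrow> pm_ring TYPE('a)"
    using pm_criterion_imp_pm pm_imp_pm_criterion by blast
  moreover have "feckly_clean_ring TYPE('a) \<Longrightarrow> pm_criterion TYPE('a) \<Longrightarrow> clean_ring TYPE('a)"
    by (rule feckly_clean_pm_criterion_imp_clean)
  ultimately show ?thesis unfolding criterion[symmetric] by blast
qed

end
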